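(* Let $V$ be a real vector space of dimension $n$, $1\le k\le n-1$, and let $L\subseteq V\oplus\wedge^kV^*$ be a weakly lagrangian subspace with $L\cap\wedge^kV^*=\{0\}$. Then $L=\{X+\varepsilon(X)\mid X\in E\}$ where $E=\mathrm{pr}_1(L)$ and $\varepsilon:E\to\wedge^kV^*$ is a linear $E$-skew map satisfying $\mathrm{Im}(\varepsilon)^\circ=\ker(\varepsilon)$. Moreover, $L$ is lagrangian if and only if $E=V$.
   Context: On $V\oplus\wedge^kV^*$ consider the $\wedge^{k-1}V^*$-valued pairing $\langle X+\alpha,Y+\beta\rangle=i_X\beta+i_Y\alpha$; $L^\perp$ denotes the orthogonal of $L$. $L$ is isotropic if $L\subseteq L^\perp$ and lagrangian if $L=L^\perp$. $\mathrm{pr}_1,\mathrm{pr}_2$ are the projections onto $V$ and $\wedge^kV^*$. For a subspace $S\subseteq\wedge^kV^*$, $S^\circ=\{X\in V\mid i_X\eta=0\ \forall \eta\in S\}$. A subspace $L$ is weakly lagrangian if it is isotropic and $L\cap V=\mathrm{pr}_2(L)^\circ$. A linear map $\varepsilon:E\to\wedge^kV^*$ is $E$-skew if $i_Y\varepsilon(X)=-i_X\varepsilon(Y)$ for all $X,Y\in E$. *)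

theory Defs
  imports "HOL-Analysis.Analysis"
begin

text \<open>The real vector space V is the whole type 'v (finite dimensional, dimension DIM('v)).
  A k-form on V is represented as a function on lists of vectors which is zero on lists
  of length different from k, and which is multilinear and alternating on lists of length k.\<close>

type_synonym 'v form = "'v list \<Rightarrow> real"

definition is_kform :: "nat \<Rightarrow> ('v::real_vector) form \<Rightarrow> bool" where
  "is_kform k \<eta> \<longleftrightarrow>
     (\<forall>xs. length xs \<noteq> k \<longrightarrow> \<eta> xs = 0) \<and>
     (\<forall>xs i. length xs = k \<and> i < k \<longrightarrow> linear (\<lambda>v. \<eta> (xs[i := v]))) \<and>
     (\<forall>xs i j. length xs = k \<and> i < j \<and> j < k \<and> xs ! i = xs ! j \<longrightarrow> \<eta> xs = 0)"

definition kforms :: "nat \<Rightarrow> ('v::real_vector) form set" where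
  "kforms k = {\<eta>. is_kform k \<eta>}"

definition fzero :: "'v form" where "fzero = (\<lambda>xs. 0)"
definition fadd :: "'v form \<Rightarrow> 'v form \<Rightarrow> 'v form" where "fadd \<eta> \<theta> = (\<lambda>xs. \<eta> xs + \<theta> xs)"
definition fscale :: "real \<Rightarrow> 'v form \<Rightarrow> 'v form" where "fscale c \<eta> = (\<lambda>xs. c * \<eta> xs)"
definition fneg :: "'v form \<Rightarrow> 'v form" where "fneg \<eta> = (\<lambda>xs. - \<eta> xs)"

definition ins :: "'v \<Rightarrow> 'v form \<Rightarrow> 'v form" where
  "ins X \<eta> = (\<lambda>xs. \<eta> (X # xs))"

text \<open>Elements of V \<oplus> \<wedge>^k V^* are pairs (X, alpha).\<close>
definition pairing :: "('v \<times> 'v form) \<Rightarrow> ('v \<times> 'v form) \<Rightarrow> 'v form" where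
  "pairing a b = fadd (ins (fst a) (snd b)) (ins (fst b) (snd a))"

definition is_subspace :: "nat \<Rightarrow> (('v::real_vector) \<times> 'v form) set \<Rightarrow> bool" where
  "is_subspace k L \<longleftrightarrow> L \<subseteq> UNIV \<times> kforms k \<and> (0, fzero) \<in> L \<and>
     (\<forall>a\<in>L. \<forall>b\<in>L. (fst a + fst b, fadd (snd a) (snd b)) \<in> L) \<and>
     (\<forall>c. \<forall>a\<in>L. (c *\<^sub>R fst a, fscale c (snd a)) \<in> L)"

definition orth :: "nat \<Rightarrow> (('v::real_vector) \<times> 'v form) set \<Rightarrow> ('v \<times> 'v form) set" where
  "orth k L = {b \<in> UNIV \<times> kforms k. \<forall>a\<in>L. pairing a b = fzero}"

definition isotropic :: "nat \<Rightarrow> (('v::real_vector) \<times> 'v form) set \<Rightarrow> bool" where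
  "isotropic k L \<longleftrightarrow> L \<subseteq> orth k L"

definition lagrangian :: "nat \<Rightarrow> (('v::real_vector) \<times> 'v form) set \<Rightarrow> bool" where
  "lagrangian k L \<longleftrightarrow> L = orth k L"

definition pr1 :: "('v \<times> 'v form) set \<Rightarrow> 'v set" where "pr1 L = fst ` L"
definition pr2 :: "('v \<times> 'v form) set \<Rightarrow> 'v form set" where "pr2 L = snd ` L"

definition ann :: "'v form set \<Rightarrow> 'v set" where
  "ann S = {X. \<forall>\<eta>\<in>S. ins X \<eta> = fzero}"

text \<open>L \<inter> V, viewed as a subset of V.\<close>
definition capV :: "('v::zero \<times> 'v form) set \<Rightarrow> 'v set" where
  "capV L = {X. (X, fzero) \<in> L}"

definition weakly_lagrangian :: "nat \<Rightarrow> (('v::real_vector) \<times> 'v form) set \<Rightarrow> bool" where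
  "weakly_lagrangian k L \<longleftrightarrow> isotropic k L \<and> capV L = ann (pr2 L)"

definition linear_on :: "('v::real_vector) set \<Rightarrow> ('v \<Rightarrow> 'v form) \<Rightarrow> bool" where
  "linear_on E \<epsilon> \<longleftrightarrow> (\<forall>X\<in>E. \<forall>Y\<in>E. \<epsilon> (X + Y) = fadd (\<epsilon> X) (\<epsilon> Y)) \<and>
                      (\<forall>c. \<forall>X\<in>E. \<epsilon> (c *\<^sub>R X) = fscale c (\<epsilon> X))"

definition E_skew :: "'v set \<Rightarrow> ('v \<Rightarrow> 'v form) \<Rightarrow> bool" where
  "E_skew E \<epsilon> \<longleftrightarrow> (\<forall>X\<in>E. \<forall>Y\<in>E. ins Y (\<epsilon> X) = fneg (ins X (\<epsilon> Y)))"

end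

theory Submission
  imports Defs
begin

text \<open>
  Since \<open>L\<close> meets \<open>\<wedge>\<^sup>kV\<^sup>*\<close> only in \<open>0\<close>, it is the graph of a linear map
  \<open>\<epsilon> : E \<rightarrow> \<wedge>\<^sup>kV\<^sup>*\<close> on \<open>E = pr\<^sub>1 L\<close>. Isotropy of the graph is exactly \<open>E\<close>-skewness
  of \<open>\<epsilon>\<close>, and the weakly lagrangian condition \<open>L \<inter> V = pr\<^sub>2(L)\<^sup>\<circ>\<close> then reads
  \<open>Im(\<epsilon>)\<^sup>\<circ> = ker \<epsilon>\<close>. The orthogonal of the graph consists of the pairs \<open>(Y, \<beta>)\<close> with
  \<open>i\<^sub>X \<beta> = - i\<^sub>Y \<epsilon>(X)\<close> for all \<open>X \<in> E\<close>. If \<open>E = V\<close>, skewness forces \<open>\<beta> = \<epsilon>(Y)\<close>,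
  so the graph is lagrangian. Conversely, every linear \<open>E\<close>-skew map
  \<open>\<theta> : E \<rightarrow> \<wedge>\<^sup>mV\<^sup>*\<close> is \<open>X \<mapsto> i\<^sub>X \<beta>\<close> for some \<open>(m+1)\<close>-form \<open>\<beta>\<close>; applied to
  \<open>\<theta>(X) = - i\<^sub>Y \<epsilon>(X)\<close> this gives an element of the orthogonal over every \<open>Y \<in> V\<close>, so a
  lagrangian graph has \<open>E = V\<close>. The extension is proved by induction on \<open>m\<close>, enlarging \<open>E\<close>
  one orthogonal direction \<open>Y\<close> at a time: the value at \<open>Y\<close> is an \<open>m\<close>-form \<open>\<gamma>\<close> with
  \<open>i\<^sub>Y \<gamma> = 0\<close> and \<open>i\<^sub>X \<gamma> = - i\<^sub>Y \<theta>(X)\<close> on \<open>E\<close>, supplied by the induction hypothesis.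
\<close>

lemma kform_vanishes: "is_kform k \<eta> \<Longrightarrow> length xs \<noteq> k \<Longrightarrow> \<eta> xs = 0"
  by (simp add: is_kform_def)

lemma kform_linear_slot:
  "is_kform k \<eta> \<Longrightarrow> length xs = k \<Longrightarrow> i < k \<Longrightarrow> linear (\<lambda>v. \<eta> (xs[i := v]))"
  by (simp add: is_kform_def)

lemma kform_alternating:
  "is_kform k \<eta> \<Longrightarrow> length xs = k \<Longrightarrow> i < j \<Longrightarrow> j < k \<Longrightarrow> xs ! i = xs ! j \<Longrightarrow> \<eta> xs = 0"
  unfolding is_kform_def by blast

lemma kform_swap:
  assumes \<eta>: "is_kform k \<eta>" and xs: "length xs = k" and ij: "i < j" "j < k"
  shows "\<eta> (xs[i := a, j := b]) = - \<eta> (xs[i := b, j := a])"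
proof -
  define f where "f u v = \<eta> (xs[i := u, j := v])" for u v
  have "linear (\<lambda>u. f u v)" for v
    unfolding f_def using kform_linear_slot[OF \<eta>, of "xs[j := v]" i] xs ij
    by (simp add: list_update_swap)
  then have lu: "f (u + w) v = f u v + f w v" for u w v
    by (simp add: linear_iff)
  have "linear (f u)" for u
    unfolding f_def using kform_linear_slot[OF \<eta>, of "xs[i := u]" j] xs ij by simp
  then have lv: "f u (v + w) = f u v + f u w" for u v w
    by (simp add: linear_iff)
  have diag: "f u u = 0" for u
    unfolding f_def using kform_alternating[OF \<eta>, of "xs[i := u, j := u]" i j] xs ij by simp
  have "0 = f (a + b) (a + b)" using diag by simp
  also have "\<dots> = f a a + f a b + (f b a + f b b)" by (simp only: lu lv)
  also have "\<dots> = f a b + f b a" using diag by simp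
  finally show ?thesis unfolding f_def by simp
qed

lemma kform_fzero: "is_kform k fzero"
  by (simp add: is_kform_def fzero_def linear_iff)

lemma kform_fadd: "is_kform k \<eta> \<Longrightarrow> is_kform k \<theta> \<Longrightarrow> is_kform k (fadd \<eta> \<theta>)"
  unfolding is_kform_def fadd_def linear_iff by (auto simp: algebra_simps)

lemma kform_fscale: "is_kform k \<eta> \<Longrightarrow> is_kform k (fscale c \<eta>)"
  unfolding is_kform_def fscale_def linear_iff by (auto simp: algebra_simps)

lemma kform_fneg: "is_kform k \<eta> \<Longrightarrow> is_kform k (fneg \<eta>)"
  unfolding is_kform_def fneg_def linear_iff by (auto simp: algebra_simps)

lemma kform_ins:
  assumes \<eta>: "is_kform (Suc n) \<eta>"
  shows "is_kform n (ins X \<eta>)"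
  unfolding is_kform_def ins_def
proof (intro conjI allI impI)
  fix xs :: "'a list"
  assume "length xs \<noteq> n"
  then show "\<eta> (X # xs) = 0" using kform_vanishes[OF \<eta>] by simp
next
  fix xs :: "'a list" and i
  assume "length xs = n \<and> i < n"
  then show "linear (\<lambda>v. \<eta> (X # xs[i := v]))"
    using kform_linear_slot[OF \<eta>, of "X # xs" "Suc i"] by simp
next
  fix xs :: "'a list" and i j
  assume "length xs = n \<and> i < j \<and> j < n \<and> xs ! i = xs ! j"
  then show "\<eta> (X # xs) = 0"
    using kform_alternating[OF \<eta>, of "X # xs" "Suc i" "Suc j"] by simp
qed

lemma kform_linear_head:
  assumes \<eta>: "is_kform k \<eta>"
  shows "\<eta> ((a + c *\<^sub>R b) # zs) = \<eta> (a # zs) + c * \<eta> (b # zs)"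
proof (cases "length (a # zs) = k")
  case True
  then have "linear (\<lambda>v. \<eta> ((a # zs)[0 := v]))" using kform_linear_slot[OF \<eta> True, of 0] by simp
  then show ?thesis by (simp add: linear_iff)
qed (simp add: kform_vanishes[OF \<eta>])

lemma kform_swap_head:
  assumes \<eta>: "is_kform k \<eta>"
  shows "\<eta> (a # b # zs) = - \<eta> (b # a # zs)"
proof (cases "length (a # b # zs) = k")
  case True
  then show ?thesis using kform_swap[OF \<eta> True, of 0 1 a b] by simp
qed (simp add: kform_vanishes[OF \<eta>])

lemma kform_repeat_head: "is_kform k \<eta> \<Longrightarrow> \<eta> (a # a # zs) = 0"
  using kform_swap_head[of k \<eta> a a zs] by simp

lemma kform_eqI_ins:
  assumes "is_kform (Suc n) \<eta>" "is_kform (Suc n) \<eta>'" "\<And>X. ins X \<eta> = ins X \<eta>'"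
  shows "\<eta> = \<eta>'"
proof
  fix xs :: "'a list"
  show "\<eta> xs = \<eta>' xs"
  proof (cases xs)
    case Nil
    then show ?thesis using assms(1,2) by (simp add: kform_vanishes)
  next
    case (Cons X zs)
    then show ?thesis using assms(3)[of X] by (simp add: ins_def fun_eq_iff)
  qed
qed

lemma linear_onD_add: "linear_on E \<theta> \<Longrightarrow> X \<in> E \<Longrightarrow> Y \<in> E \<Longrightarrow> \<theta> (X + Y) xs = \<theta> X xs + \<theta> Y xs"
  by (simp add: linear_on_def fadd_def)

lemma linear_onD_scale: "linear_on E \<theta> \<Longrightarrow> X \<in> E \<Longrightarrow> \<theta> (c *\<^sub>R X) xs = c * \<theta> X xs"
  by (simp add: linear_on_def fscale_def)

lemma linear_onI:
  assumes "\<And>X Y xs. X \<in> E \<Longrightarrow> Y \<in> E \<Longrightarrow> \<theta> (X + Y) xs = \<theta> X xs + \<theta> Y xs"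
    and "\<And>c X xs. X \<in> E \<Longrightarrow> \<theta> (c *\<^sub>R X) xs = c * \<theta> X xs"
  shows "linear_on E \<theta>"
  using assms by (simp add: linear_on_def fadd_def fscale_def fun_eq_iff)

lemma E_skewD:
  assumes "E_skew E \<theta>" "X \<in> E" "Z \<in> E"
  shows "\<theta> X (Z # zs) = - \<theta> Z (X # zs)"
proof -
  have "ins Z (\<theta> X) = fneg (ins X (\<theta> Z))" using assms unfolding E_skew_def by blast
  then show ?thesis by (simp add: ins_def fneg_def fun_eq_iff)
qed

lemma E_skewI:
  assumes "\<And>X Z zs. X \<in> E \<Longrightarrow> Z \<in> E \<Longrightarrow> \<theta> X (Z # zs) = - \<theta> Z (X # zs)"
  shows "E_skew E \<theta>"
  unfolding E_skew_def ins_def fneg_def by (intro ballI ext assms)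

lemma E_skew_self: "E_skew E \<theta> \<Longrightarrow> X \<in> E \<Longrightarrow> \<theta> X (X # zs) = 0"
  using E_skewD[of E \<theta> X X zs] by simp

definition skew_map :: "nat \<Rightarrow> ('v::real_vector) set \<Rightarrow> ('v \<Rightarrow> 'v form) \<Rightarrow> bool" where
  "skew_map n E \<theta> \<longleftrightarrow> (\<forall>X\<in>E. is_kform n (\<theta> X)) \<and> linear_on E \<theta> \<and> E_skew E \<theta>"

lemma
  assumes "skew_map n E \<theta>"
  shows skew_map_kform: "X \<in> E \<Longrightarrow> is_kform n (\<theta> X)"
    and skew_map_linear_on: "linear_on E \<theta>"
    and skew_map_E_skew: "E_skew E \<theta>"
  using assms by (simp_all add: skew_map_def)

lemma skew_map_contract:
  assumes \<theta>: "skew_map (Suc n) E \<theta>"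
  shows "skew_map n E (\<lambda>X. fneg (ins Y (\<theta> X)))"
  unfolding skew_map_def
proof (intro conjI ballI)
  show "is_kform n (fneg (ins Y (\<theta> X)))" if "X \<in> E" for X
    using skew_map_kform[OF \<theta> that] by (simp add: kform_fneg kform_ins)
  show "linear_on E (\<lambda>X. fneg (ins Y (\<theta> X)))"
    using skew_map_linear_on[OF \<theta>]
    by (intro linear_onI) (simp_all add: fneg_def ins_def linear_onD_add linear_onD_scale)
  show "E_skew E (\<lambda>X. fneg (ins Y (\<theta> X)))"
  proof (rule E_skewI)
    fix X Z zs assume X: "X \<in> E" and Z: "Z \<in> E"
    note val = skew_map_kform[OF \<theta> X] skew_map_kform[OF \<theta> Z]
    note skew = skew_map_E_skew[OF \<theta>]
    have "\<theta> X (Y # Z # zs) = - \<theta> X (Z # Y # zs)" by (rule kform_swap_head[OF val(1)])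
    also have "\<dots> = \<theta> Z (X # Y # zs)" using E_skewD[OF skew X Z] by simp
    also have "\<dots> = - \<theta> Z (Y # X # zs)" by (rule kform_swap_head[OF val(2)])
    finally show "fneg (ins Y (\<theta> X)) (Z # zs) = - fneg (ins Y (\<theta> Z)) (X # zs)"
      by (simp add: fneg_def ins_def)
  qed
qed

lemma kform_of_skew_map:
  assumes \<theta>: "skew_map n UNIV \<theta>"
  defines "\<beta> \<equiv> \<lambda>xs. if length xs = Suc n then \<theta> (hd xs) (tl xs) else 0"
  shows "is_kform (Suc n) \<beta>" and "ins X \<beta> = \<theta> X"
proof -
  note val = skew_map_kform[OF \<theta> UNIV_I]
  note lin = skew_map_linear_on[OF \<theta>] and skew = skew_map_E_skew[OF \<theta>]
  show "ins X \<beta> = \<theta> X"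
    using kform_vanishes[OF val] by (auto simp: \<beta>_def ins_def)
  show "is_kform (Suc n) \<beta>"
    unfolding is_kform_def
  proof (intro conjI allI impI)
    fix xs :: "'a list" and i
    assume "length xs = Suc n \<and> i < Suc n"
    then obtain x ys where xs: "xs = x # ys" and ys: "length ys = n" and i: "i < Suc n"
      by (cases xs) auto
    show "linear (\<lambda>v. \<beta> (xs[i := v]))"
    proof (cases i)
      case 0
      have "linear (\<lambda>v. \<theta> v ys)"
        using lin by (simp add: linear_iff linear_onD_add linear_onD_scale)
      then show ?thesis by (simp add: \<beta>_def xs ys 0)
    next
      case (Suc i')
      then show ?thesis using kform_linear_slot[OF val ys, of i'] i by (simp add: \<beta>_def xs ys)
    qed
  next
    fix xs :: "'a list" and i j
    assume a: "length xs = Suc n \<and> i < j \<and> j < Suc n \<and> xs ! i = xs ! j"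
    then obtain x ys j' where xs: "xs = x # ys" and ys: "length ys = n" and j: "j = Suc j'"
      by (cases xs; cases j) auto
    have "\<theta> x ys = 0"
    proof (cases i)
      case (Suc i')
      then show ?thesis using kform_alternating[OF val ys, of i' j'] a xs j by simp
    next
      case 0
      then have xj: "ys ! j' = x" using a xs j by simp
      obtain z zs where ys_Cons: "ys = z # zs" using ys a j by (cases ys) auto
      \<comment> \<open>bring the repeated vector to the front of \<open>ys\<close>, where skewness kills it\<close>
      show ?thesis
      proof (cases j')
        case 0
        then show ?thesis using xj ys_Cons E_skew_self[OF skew] by simp
      next
        case (Suc j'')
        have "\<theta> x ys = \<theta> x (ys[0 := ys ! 0, j' := ys ! j'])" by simp
        also have "\<dots> = - \<theta> x (ys[0 := ys ! j', j' := ys ! 0])"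
          by (rule kform_swap[OF val ys]) (use Suc a j ys in auto)
        also have "\<dots> = 0"
          using xj Suc ys_Cons E_skew_self[OF skew, of x] by simp
        finally show ?thesis .
      qed
    qed
    then show "\<beta> xs = 0" by (simp add: \<beta>_def xs)
  qed (simp add: \<beta>_def)
qed

locale orthogonal_extension =
  fixes E :: "'v::euclidean_space set" and Y :: 'v
  assumes subspace_E: "subspace E" and Y_nonzero: "Y \<noteq> 0"
    and Y_orthogonal: "\<And>y. y \<in> E \<Longrightarrow> Y \<bullet> y = 0"
begin

definition coeff :: "'v \<Rightarrow> real" where "coeff x = (x \<bullet> Y) / (Y \<bullet> Y)"

definition proj :: "'v \<Rightarrow> 'v" where "proj x = x - coeff x *\<^sub>R Y"

lemma coeff_add: "coeff (x + y) = coeff x + coeff y"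
  by (simp add: coeff_def inner_add_left add_divide_distrib)

lemma coeff_scale: "coeff (c *\<^sub>R x) = c * coeff x"
  by (simp add: coeff_def)

lemma proj_add: "proj (x + y) = proj x + proj y"
  by (simp add: proj_def coeff_add algebra_simps)

lemma proj_scale: "proj (c *\<^sub>R x) = c *\<^sub>R proj x"
  by (simp add: proj_def coeff_scale algebra_simps)

lemma coeff_E: "x \<in> E \<Longrightarrow> coeff x = 0"
  using Y_orthogonal by (metis coeff_def div_0 inner_commute)

lemma proj_E: "x \<in> E \<Longrightarrow> proj x = x"
  by (simp add: proj_def coeff_E)

lemma proj_Y: "proj Y = 0"
  using Y_nonzero by (simp add: proj_def coeff_def)

lemma proj_plus_coeff: "proj x + coeff x *\<^sub>R Y = x"
  by (simp add: proj_def)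

lemma proj_mem:
  assumes "x \<in> span (insert Y E)"
  shows "proj x \<in> E"
proof -
  obtain c where c: "x - c *\<^sub>R Y \<in> E"
    using assms span_eq_iff[THEN iffD2, OF subspace_E] by (auto simp: span_breakdown_eq)
  then have "(x - c *\<^sub>R Y) \<bullet> Y = 0"
    using Y_orthogonal by (metis inner_commute)
  then have "coeff x = c"
    using Y_nonzero by (simp add: coeff_def inner_diff_left field_simps)
  with c show ?thesis by (simp add: proj_def)
qed

lemma kform_split_head:
  "is_kform k \<eta> \<Longrightarrow> \<eta> (x # zs) = \<eta> (proj x # zs) + coeff x * \<eta> (Y # zs)"
  using kform_linear_head[of k \<eta> "proj x" "coeff x" Y zs] by (simp add: proj_plus_coeff)

lemma linear_on_comp_proj:
  "linear_on E \<theta> \<Longrightarrow> linear_on (span (insert Y E)) (\<lambda>x. \<theta> (proj x))"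
  by (intro linear_onI) (simp_all add: proj_add proj_scale proj_mem linear_onD_add linear_onD_scale)

lemma skew_map_comp_proj:
  assumes \<psi>: "skew_map n E \<psi>" and Y_null: "\<And>X zs. X \<in> E \<Longrightarrow> \<psi> X (Y # zs) = 0"
  shows "skew_map n (span (insert Y E)) (\<lambda>x. \<psi> (proj x))"
  unfolding skew_map_def
proof (intro conjI ballI)
  show "is_kform n (\<psi> (proj x))" if "x \<in> span (insert Y E)" for x
    using \<psi> proj_mem[OF that] by (simp add: skew_map_def)
  show "linear_on (span (insert Y E)) (\<lambda>x. \<psi> (proj x))"
    using \<psi> by (simp add: skew_map_def linear_on_comp_proj)
  show "E_skew (span (insert Y E)) (\<lambda>x. \<psi> (proj x))"
  proof (rule E_skewI)
    fix a b zs assume "a \<in> span (insert Y E)" "b \<in> span (insert Y E)"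
    then have a: "proj a \<in> E" and b: "proj b \<in> E" by (simp_all add: proj_mem)
    have "\<psi> (proj a) (b # zs) = \<psi> (proj a) (proj b # zs)"
      using kform_split_head[OF skew_map_kform[OF \<psi> a], of b zs] Y_null[OF a] by simp
    also have "\<dots> = - \<psi> (proj b) (proj a # zs)"
      using E_skewD[OF skew_map_E_skew[OF \<psi>] a b] by simp
    also have "\<dots> = - \<psi> (proj b) (a # zs)"
      using kform_split_head[OF skew_map_kform[OF \<psi> b], of a zs] Y_null[OF b] by simp
    finally show "\<psi> (proj a) (b # zs) = - \<psi> (proj b) (a # zs)" .
  qed
qed

lemma exists_kform_contracting_Y:
  assumes ext: "\<And>(F :: 'v set) \<psi>. subspace F \<Longrightarrow> skew_map n F \<psi> \<Longrightarrow>
      \<exists>\<beta>. is_kform (Suc n) \<beta> \<and> (\<forall>X\<in>F. ins X \<beta> = \<psi> X)"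
    and \<theta>: "skew_map (Suc n) E \<theta>"
  shows "\<exists>\<gamma>. is_kform (Suc n) \<gamma> \<and> ins Y \<gamma> = fzero \<and> (\<forall>X\<in>E. ins X \<gamma> = fneg (ins Y (\<theta> X)))"
proof -
  define \<psi> where "\<psi> X = fneg (ins Y (\<theta> X))" for X
  have \<psi>_proj: "skew_map n (span (insert Y E)) (\<lambda>x. \<psi> (proj x))"
  proof (rule skew_map_comp_proj)
    show "skew_map n E \<psi>" unfolding \<psi>_def using \<theta> by (rule skew_map_contract)
    show "\<psi> X (Y # zs) = 0" if "X \<in> E" for X zs
      using skew_map_kform[OF \<theta> that] by (simp add: \<psi>_def fneg_def ins_def kform_repeat_head)
  qed
  then obtain \<gamma> where \<gamma>: "is_kform (Suc n) \<gamma>" and ins_\<gamma>: "\<forall>x\<in>span (insert Y E). ins x \<gamma> = \<psi> (proj x)"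
    using ext[OF _ \<psi>_proj] by auto
  have "\<theta> 0 = fzero"
    using \<theta> linear_onD_scale[of E \<theta> 0 0] subspace_0[OF subspace_E]
    by (auto simp: skew_map_def fzero_def)
  then have "ins Y \<gamma> = fzero"
    using ins_\<gamma> proj_Y by (simp add: span_base \<psi>_def fneg_def ins_def fzero_def)
  moreover have "ins X \<gamma> = \<psi> X" if "X \<in> E" for X
    using ins_\<gamma> that proj_E by (simp add: span_base)
  ultimately show ?thesis using \<gamma> by (auto simp: \<psi>_def)
qed

lemma skew_map_extend:
  assumes \<theta>: "skew_map n E \<theta>" and \<gamma>: "is_kform n \<gamma>" "ins Y \<gamma> = fzero"
    and ins_\<gamma>: "\<And>X. X \<in> E \<Longrightarrow> ins X \<gamma> = fneg (ins Y (\<theta> X))"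
  defines "\<theta>' \<equiv> \<lambda>x. fadd (\<theta> (proj x)) (fscale (coeff x) \<gamma>)"
  shows "skew_map n (span (insert Y E)) \<theta>'" and "X \<in> E \<Longrightarrow> \<theta>' X = \<theta> X"
proof -
  note val = skew_map_kform[OF \<theta>]
  note lin = skew_map_linear_on[OF \<theta>] and skew = skew_map_E_skew[OF \<theta>]
  have \<gamma>_Y: "\<gamma> (Y # zs) = 0" for zs using \<gamma>(2) by (simp add: ins_def fzero_def fun_eq_iff)
  have \<gamma>_E: "\<gamma> (X # zs) = - \<theta> X (Y # zs)" if "X \<in> E" for X zs
    using ins_\<gamma>[OF that] by (simp add: ins_def fneg_def fun_eq_iff)
  show "X \<in> E \<Longrightarrow> \<theta>' X = \<theta> X" by (simp add: \<theta>'_def proj_E coeff_E fadd_def fscale_def)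
  show "skew_map n (span (insert Y E)) \<theta>'"
    unfolding skew_map_def
  proof (intro conjI ballI)
    show "is_kform n (\<theta>' x)" if "x \<in> span (insert Y E)" for x
      unfolding \<theta>'_def using val[OF proj_mem[OF that]] \<gamma>(1) by (simp add: kform_fadd kform_fscale)
    show "linear_on (span (insert Y E)) \<theta>'"
      using lin by (intro linear_onI) (simp_all add: \<theta>'_def fadd_def fscale_def coeff_add coeff_scale
          proj_add proj_scale proj_mem linear_onD_add linear_onD_scale algebra_simps)
    show "E_skew (span (insert Y E)) \<theta>'"
    proof (rule E_skewI)
      fix a b zs assume "a \<in> span (insert Y E)" "b \<in> span (insert Y E)"
      then have a: "proj a \<in> E" and b: "proj b \<in> E" by (simp_all add: proj_mem)
      \<comment> \<open>both sides equal
        \<open>\<theta> (proj a) (proj b # zs) + coeff b * \<theta> (proj a) (Y # zs) - coeff a * \<theta> (proj b) (Y # zs)\<close>\<close>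
      have "\<theta> (proj a) (b # zs) = \<theta> (proj a) (proj b # zs) + coeff b * \<theta> (proj a) (Y # zs)"
           "\<theta> (proj b) (a # zs) = \<theta> (proj b) (proj a # zs) + coeff a * \<theta> (proj b) (Y # zs)"
        using kform_split_head val a b by blast+
      moreover have "\<gamma> (b # zs) = - \<theta> (proj b) (Y # zs)" "\<gamma> (a # zs) = - \<theta> (proj a) (Y # zs)"
        using kform_split_head[OF \<gamma>(1), of b zs] kform_split_head[OF \<gamma>(1), of a zs]
          \<gamma>_Y \<gamma>_E[OF a] \<gamma>_E[OF b] by simp_all
      moreover have "\<theta> (proj a) (proj b # zs) = - \<theta> (proj b) (proj a # zs)"
        using E_skewD[OF skew a b] .
      ultimately show "\<theta>' a (b # zs) = - \<theta>' b (a # zs)"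
        by (simp add: \<theta>'_def fadd_def fscale_def algebra_simps)
    qed
  qed
qed

end

lemma skew_map_extend_UNIV:
  fixes E :: "'v::euclidean_space set"
  assumes contract: "\<And>(F :: 'v set) Y \<psi>. orthogonal_extension F Y \<Longrightarrow> skew_map n F \<psi> \<Longrightarrow>
      \<exists>\<gamma>. is_kform n \<gamma> \<and> ins Y \<gamma> = fzero \<and> (\<forall>X\<in>F. ins X \<gamma> = fneg (ins Y (\<psi> X)))"
  shows "subspace E \<Longrightarrow> skew_map n E \<theta> \<Longrightarrow> \<exists>\<theta>'. skew_map n UNIV \<theta>' \<and> (\<forall>X\<in>E. \<theta>' X = \<theta> X)"
proof (induction "DIM('v) - dim E" arbitrary: E \<theta>)
  case 0
  then have "dim E = DIM('v)" using dim_subset_UNIV[of E] by linarith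
  then have "E = UNIV" using dim_eq_full span_eq_iff 0(2) by blast
  with 0 show ?case by blast
next
  case (Suc d)
  then have "dim E < DIM('v)" by linarith
  then obtain Y where Y: "Y \<noteq> 0" "\<And>y. y \<in> span E \<Longrightarrow> orthogonal Y y"
    using orthogonal_to_subspace_exists by blast
  interpret orthogonal_extension E Y
    using Suc.prems(1) Y by unfold_locales (auto simp: orthogonal_def span_base)
  obtain \<gamma> where \<gamma>: "is_kform n \<gamma>" "ins Y \<gamma> = fzero" "\<forall>X\<in>E. ins X \<gamma> = fneg (ins Y (\<theta> X))"
    using contract[OF orthogonal_extension_axioms Suc.prems(2)] by blast
  note extension = skew_map_extend[OF Suc.prems(2) \<gamma>(1,2) \<gamma>(3)[rule_format]]
  have "Y \<notin> span E"
    using Y orthogonal_self by blast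
  then have "d = DIM('v) - dim (span (insert Y E))"
    using Suc.hyps(2) by (simp add: dim_insert)
  then obtain \<theta>' where "skew_map n UNIV \<theta>'"
      "\<forall>X\<in>span (insert Y E). \<theta>' X = fadd (\<theta> (proj X)) (fscale (coeff X) \<gamma>)"
    using Suc.hyps(1)[OF _ _ extension(1)] by blast
  moreover have "E \<subseteq> span (insert Y E)"
    by (meson span_superset subset_insertI subset_trans)
  ultimately show ?case using extension(2) by (auto simp: subset_iff)
qed

lemma skew_map_eq_ins_kform:
  fixes E :: "'v::euclidean_space set"
  assumes "subspace E" "skew_map n E \<theta>"
  shows "\<exists>\<beta>. is_kform (Suc n) \<beta> \<and> (\<forall>X\<in>E. ins X \<beta> = \<theta> X)"
  using assms
proof (induction n arbitrary: E \<theta>)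
  case 0
  have "\<exists>\<gamma>. is_kform 0 \<gamma> \<and> ins Y \<gamma> = fzero \<and> (\<forall>X\<in>F. ins X \<gamma> = fneg (ins Y (\<psi> X)))"
    if "orthogonal_extension F Y" "skew_map 0 F \<psi>" for F :: "'v set" and Y \<psi>
  proof (intro exI conjI ballI)
    show "is_kform 0 fzero" by (rule kform_fzero)
    show "ins Y fzero = fzero" by (simp add: ins_def fzero_def)
    show "ins X fzero = fneg (ins Y (\<psi> X))" if "X \<in> F" for X
      using kform_vanishes[OF skew_map_kform[OF \<open>skew_map 0 F \<psi>\<close> that]]
      by (simp add: ins_def fneg_def fzero_def)
  qed
  then obtain \<theta>' where "skew_map 0 UNIV \<theta>'" "\<forall>X\<in>E. \<theta>' X = \<theta> X"
    using skew_map_extend_UNIV 0 by blast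
  then show ?case using kform_of_skew_map[OF \<open>skew_map 0 UNIV \<theta>'\<close>] by auto
next
  case (Suc n)
  obtain \<theta>' where "skew_map (Suc n) UNIV \<theta>'" "\<forall>X\<in>E. \<theta>' X = \<theta> X"
    using skew_map_extend_UNIV[OF orthogonal_extension.exists_kform_contracting_Y[OF _ Suc.IH]
        Suc.prems]
    by blast
  then show ?case using kform_of_skew_map[OF \<open>skew_map (Suc n) UNIV \<theta>'\<close>] by auto
qed

definition form_graph :: "'v set \<Rightarrow> ('v \<Rightarrow> 'v form) \<Rightarrow> ('v \<times> 'v form) set" where
  "form_graph E \<epsilon> = {(X, \<epsilon> X) | X. X \<in> E}"

lemma mem_form_graph: "(X, \<eta>) \<in> form_graph E \<epsilon> \<longleftrightarrow> X \<in> E \<and> \<eta> = \<epsilon> X"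
  by (auto simp: form_graph_def)

lemma pr2_form_graph: "pr2 (form_graph E \<epsilon>) = \<epsilon> ` E"
  by (force simp: pr2_def form_graph_def)

lemma capV_form_graph: "capV (form_graph E \<epsilon>) = {X \<in> E. \<epsilon> X = fzero}"
  by (auto simp: capV_def mem_form_graph)

lemma mem_orth_form_graph:
  "(Y, \<beta>) \<in> orth k (form_graph E \<epsilon>) \<longleftrightarrow>
     is_kform k \<beta> \<and> (\<forall>X\<in>E. \<forall>zs. \<beta> (X # zs) = - \<epsilon> X (Y # zs))"
proof -
  have "pairing (X, \<epsilon> X) (Y, \<beta>) = fzero \<longleftrightarrow> (\<forall>zs. \<beta> (X # zs) = - \<epsilon> X (Y # zs))" for X
    by (auto simp: pairing_def fadd_def ins_def fzero_def fun_eq_iff eq_neg_iff_add_eq_0)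
  then show ?thesis by (auto simp: orth_def kforms_def form_graph_def)
qed

lemma isotropic_form_graph_iff:
  assumes "\<forall>X\<in>E. is_kform k (\<epsilon> X)"
  shows "isotropic k (form_graph E \<epsilon>) \<longleftrightarrow> E_skew E \<epsilon>"
proof -
  have "isotropic k (form_graph E \<epsilon>) \<longleftrightarrow> (\<forall>Y\<in>E. (Y, \<epsilon> Y) \<in> orth k (form_graph E \<epsilon>))"
    by (auto simp: isotropic_def form_graph_def)
  also have "\<dots> \<longleftrightarrow> (\<forall>Y\<in>E. \<forall>X\<in>E. \<forall>zs. \<epsilon> Y (X # zs) = - \<epsilon> X (Y # zs))"
    using assms by (simp add: mem_orth_form_graph)
  also have "\<dots> \<longleftrightarrow> E_skew E \<epsilon>"
    by (blast intro: E_skewI dest: E_skewD)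
  finally show ?thesis .
qed

lemma ex_orth_form_graph:
  fixes E :: "'v::euclidean_space set"
  assumes "subspace E" "skew_map (Suc n) E \<epsilon>"
  shows "\<exists>\<beta>. (Y, \<beta>) \<in> orth (Suc n) (form_graph E \<epsilon>)"
proof -
  obtain \<beta> where "is_kform (Suc n) \<beta>" "\<forall>X\<in>E. ins X \<beta> = fneg (ins Y (\<epsilon> X))"
    using skew_map_eq_ins_kform[OF assms(1) skew_map_contract[OF assms(2)]] by blast
  then show ?thesis by (auto simp: mem_orth_form_graph ins_def fneg_def fun_eq_iff)
qed

lemma lagrangian_form_graph_iff:
  fixes E :: "'v::euclidean_space set"
  assumes E: "subspace E" and \<epsilon>: "skew_map (Suc n) E \<epsilon>"
  shows "lagrangian (Suc n) (form_graph E \<epsilon>) \<longleftrightarrow> E = UNIV"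
proof
  assume lag: "lagrangian (Suc n) (form_graph E \<epsilon>)"
  have "Y \<in> E" for Y
  proof -
    obtain \<beta> where "(Y, \<beta>) \<in> orth (Suc n) (form_graph E \<epsilon>)"
      using ex_orth_form_graph[OF E \<epsilon>] by blast
    then have "(Y, \<beta>) \<in> form_graph E \<epsilon>"
      using lag unfolding lagrangian_def by blast
    then show ?thesis by (simp add: mem_form_graph)
  qed
  then show "E = UNIV" by blast
next
  assume UNIV: "E = UNIV"
  have "(Y, \<beta>) \<in> form_graph E \<epsilon>" if "(Y, \<beta>) \<in> orth (Suc n) (form_graph E \<epsilon>)" for Y \<beta>
  proof -
    have \<beta>: "is_kform (Suc n) \<beta>" and ins_\<beta>: "\<And>X zs. \<beta> (X # zs) = - \<epsilon> X (Y # zs)"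
      using that UNIV by (auto simp: mem_orth_form_graph)
    have "ins X \<beta> = ins X (\<epsilon> Y)" for X
      using ins_\<beta> E_skewD[OF skew_map_E_skew[OF \<epsilon>], of Y X] UNIV by (simp add: ins_def fun_eq_iff)
    then have "\<beta> = \<epsilon> Y"
      using kform_eqI_ins[OF \<beta> skew_map_kform[OF \<epsilon>]] UNIV by blast
    with UNIV show ?thesis by (simp add: mem_form_graph)
  qed
  moreover have "isotropic (Suc n) (form_graph E \<epsilon>)"
    using \<epsilon> isotropic_form_graph_iff by (auto simp: skew_map_def)
  ultimately show "lagrangian (Suc n) (form_graph E \<epsilon>)"
    unfolding lagrangian_def isotropic_def by auto
qed

lemma subspace_eq_form_graph:
  assumes L: "is_subspace k L" and fibre: "{\<eta>. (0, \<eta>) \<in> L} = {fzero}"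
  obtains \<epsilon> where "subspace (pr1 L)" "\<forall>X\<in>pr1 L. is_kform k (\<epsilon> X)" "linear_on (pr1 L) \<epsilon>"
    "L = form_graph (pr1 L) \<epsilon>"
proof -
  have L_kforms: "L \<subseteq> UNIV \<times> kforms k" and L_zero: "(0, fzero) \<in> L"
    and L_add: "\<And>a b. a \<in> L \<Longrightarrow> b \<in> L \<Longrightarrow> (fst a + fst b, fadd (snd a) (snd b)) \<in> L"
    and L_scale: "\<And>c a. a \<in> L \<Longrightarrow> (c *\<^sub>R fst a, fscale c (snd a)) \<in> L"
    using L unfolding is_subspace_def by blast+
  have unique: "\<eta> = \<eta>'" if "(X, \<eta>) \<in> L" "(X, \<eta>') \<in> L" for X \<eta> \<eta>'
  proof -
    have "(0, fadd \<eta> (fscale (-1) \<eta>')) \<in> L"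
      using L_add[OF that(1) L_scale[OF that(2), of "-1"]] by simp
    then have "fadd \<eta> (fscale (-1) \<eta>') = fzero" using fibre by blast
    then show ?thesis by (auto simp: fadd_def fscale_def fzero_def fun_eq_iff)
  qed
  define \<epsilon> where "\<epsilon> X = (THE \<eta>. (X, \<eta>) \<in> L)" for X
  have \<epsilon>_eq: "\<epsilon> X = \<eta>" if "(X, \<eta>) \<in> L" for X \<eta>
    unfolding \<epsilon>_def
  proof (rule the_equality)
    show "(X, \<eta>) \<in> L" by (fact that)
    show "\<eta>' = \<eta>" if "(X, \<eta>') \<in> L" for \<eta>'
      using unique \<open>(X, \<eta>) \<in> L\<close> that by blast
  qed
  have pr1_iff: "X \<in> pr1 L \<longleftrightarrow> (\<exists>\<eta>. (X, \<eta>) \<in> L)" for X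
    by (force simp: pr1_def)
  have mem_L: "(X, \<eta>) \<in> L \<longleftrightarrow> X \<in> pr1 L \<and> \<eta> = \<epsilon> X" for X \<eta>
    using \<epsilon>_eq pr1_iff by blast
  have add: "(X + Y, fadd (\<epsilon> X) (\<epsilon> Y)) \<in> L" if "X \<in> pr1 L" "Y \<in> pr1 L" for X Y
    using L_add[of "(X, \<epsilon> X)" "(Y, \<epsilon> Y)"] mem_L that by simp
  have scale: "(c *\<^sub>R X, fscale c (\<epsilon> X)) \<in> L" if "X \<in> pr1 L" for c X
    using L_scale[of "(X, \<epsilon> X)" c] mem_L that by simp
  have "subspace (pr1 L)"
    unfolding subspace_def using L_zero add scale pr1_iff by blast
  moreover have "\<forall>X\<in>pr1 L. is_kform k (\<epsilon> X)"
    using L_kforms mem_L by (auto simp: kforms_def)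
  moreover have "linear_on (pr1 L) \<epsilon>"
    unfolding linear_on_def using add scale \<epsilon>_eq by blast
  moreover have "L = form_graph (pr1 L) \<epsilon>"
  proof (rule set_eqI)
    fix a :: "'a \<times> 'a form"
    show "a \<in> L \<longleftrightarrow> a \<in> form_graph (pr1 L) \<epsilon>"
      using mem_L[of "fst a" "snd a"] mem_form_graph[of "fst a" "snd a"] by simp
  qed
  ultimately show ?thesis by (rule that)
qed

theorem proposition3p12:
  fixes L :: "('v::euclidean_space \<times> 'v form) set" and k :: nat
  assumes "1 \<le> k" and "k \<le> DIM('v) - 1"
    and "is_subspace k L"
    and "weakly_lagrangian k L"
    and "{\<eta>. (0, \<eta>) \<in> L} = {fzero}"
  shows "(\<exists>\<epsilon>. (\<forall>X\<in>pr1 L. \<epsilon> X \<in> kforms k) \<and> linear_on (pr1 L) \<epsilon> \<and>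
              L = {(X, \<epsilon> X) | X. X \<in> pr1 L} \<and>
              E_skew (pr1 L) \<epsilon> \<and>
              ann (\<epsilon> ` pr1 L) = {X \<in> pr1 L. \<epsilon> X = fzero})
         \<and> (lagrangian k L \<longleftrightarrow> pr1 L = UNIV)"
proof -
  obtain n where k: "k = Suc n" using assms(1) by (cases k) auto
  define E where "E = pr1 L"
  obtain \<epsilon> where E: "subspace E" and val: "\<forall>X\<in>E. is_kform k (\<epsilon> X)"
    and lin: "linear_on E \<epsilon>" and L: "L = form_graph E \<epsilon>"
    using subspace_eq_form_graph[OF assms(3,5)] unfolding E_def by blast
  have skew: "E_skew E \<epsilon>"
    using assms(4) isotropic_form_graph_iff[OF val] by (simp add: L weakly_lagrangian_def)
  have "ann (\<epsilon> ` E) = {X \<in> E. \<epsilon> X = fzero}"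
    using assms(4) by (simp add: L weakly_lagrangian_def pr2_form_graph capV_form_graph)
  moreover have "lagrangian k L \<longleftrightarrow> E = UNIV"
    using lagrangian_form_graph_iff[OF E] val lin skew by (simp add: L k skew_map_def)
  moreover have "L = {(X, \<epsilon> X) | X. X \<in> E}"
    using L by (simp add: form_graph_def)
  ultimately show ?thesis
    using val lin skew unfolding E_def[symmetric] kforms_def by blast
qed

end
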